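(* Let $r,d\ge 1$ be integers, $N=d2^r$, and let $F_1,F_2,\dots,F_{\binom{N}{d}}$ enumerate the $d$-element subsets of $[N]$. For $i\in[\binom{N}{d}]$ and $j\in[dr]$, let $\beta(i,j)$ be the $j$-th bit of the $dr$-bit binary representation of $i$ if $i\le 2^{dr}$, and $\beta(i,j)=\star$ otherwise. Define the partial concept class $\mathbb{H}_{r,d}=\{h_{i,j}\}$ on $[d(2^r+r)]$ by $h_{i,j}(x)=1$ if $x\in F_i$, $h_{i,j}(x)=0$ if $x\in[N]\setminus F_i$, $h_{i,j}(N+j)=\beta(i,j)$, and $h_{i,j}(x)=\star$ for all other $x$. Then $d\le\mathrm{LD}(\mathbb{H}_{r,d})\le d+1$, and the SOA disambiguation of $\mathbb{H}_{r,d}$ (with respect to the natural ordering of $[d(2^r+r)]$) shatters the set $\{N+1,\dots,N+dr\}$; in particular its VC dimension is at least $dr$.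
   Context: Littlestone dimension, VC dimension and shattering of a partial class $\mathbb{H}\subseteq\{0,1,\star\}^{[n]}$ are as usual (a set/tree is shattered if every $0/1$ pattern/leaf is realized by some concept taking the required $0/1$ values), with $\mathrm{LD}(\emptyset)=-1$. For $\vec b\in\{0,1,\star\}^k$, $\mathbb{H}|_{\vec b}=\{h\in\mathbb{H}:h(i)=b_i\ \forall i\in[k]\}$. The SOA disambiguation is produced iteratively: for $k=1,\dots,n$, given the current class (values at $1,\dots,k-1$ already in $\{0,1\}$), for every $\vec b\in\{0,1\}^{k-1}$ choose $c\in\{0,1\}$ maximizing $\mathrm{LD}(\mathbb{H}|_{\vec b c})$ (ties broken toward $c=0$) and set $h(k):=c$ for every $h\in\mathbb{H}|_{\vec b\star}$; the final total class is the SOA disambiguation. *)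

theory Defs
  imports Main
begin

text \<open>Values of a partial concept: 0, 1, or undefined (star).
  A partial concept on the domain [n] = {1..n} is a function nat => pval;
  points outside the domain carry Star.\<close>
datatype pval = P0 | P1 | Star

type_synonym pconcept = "nat \<Rightarrow> pval"

datatype mtree = Leaf | Node nat mtree mtree

fun complete_depth :: "mtree \<Rightarrow> nat \<Rightarrow> bool" where
  "complete_depth Leaf k \<longleftrightarrow> k = 0"
| "complete_depth (Node x l r) k \<longleftrightarrow>
     (k > 0 \<and> complete_depth l (k - 1) \<and> complete_depth r (k - 1))"

fun shatters_tree :: "nat set \<Rightarrow> pconcept set \<Rightarrow> mtree \<Rightarrow> bool" where
  "shatters_tree X H Leaf \<longleftrightarrow> H \<noteq> {}"
| "shatters_tree X H (Node x t0 t1) \<longleftrightarrow>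
     x \<in> X \<and> shatters_tree X {h \<in> H. h x = P0} t0 \<and> shatters_tree X {h \<in> H. h x = P1} t1"

definition LD :: "nat set \<Rightarrow> pconcept set \<Rightarrow> int" where
  "LD X H = (if H = {} then -1
     else int (GREATEST k. \<exists>t. complete_depth t k \<and> shatters_tree X H t))"

definition shatters_set :: "pconcept set \<Rightarrow> nat set \<Rightarrow> bool" where
  "shatters_set H S \<longleftrightarrow>
     (\<forall>f :: nat \<Rightarrow> bool. \<exists>h \<in> H. \<forall>x \<in> S. h x = (if f x then P1 else P0))"

definition VC :: "nat set \<Rightarrow> pconcept set \<Rightarrow> nat" where
  "VC X H = (GREATEST k. \<exists>S \<subseteq> X. card S = k \<and> shatters_set H S)"

definition soa_step :: "nat set \<Rightarrow> pconcept set \<Rightarrow> nat \<Rightarrow> pconcept set" where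
  "soa_step X H k = (\<lambda>h.
     if h k = Star \<and> (\<forall>i \<in> {1..<k}. h i \<noteq> Star) then
       h(k := (if LD X {g \<in> H. (\<forall>i \<in> {1..<k}. g i = h i) \<and> g k = P1}
                  > LD X {g \<in> H. (\<forall>i \<in> {1..<k}. g i = h i) \<and> g k = P0}
               then P1 else P0))
     else h) ` H"

definition soa_disamb :: "nat \<Rightarrow> pconcept set \<Rightarrow> pconcept set" where
  "soa_disamb n H = foldl (\<lambda>G k. soa_step {1..n} G k) H [1..<Suc n]"

text \<open>beta m i j: j-th bit (j = 1 most significant) of the m-bit binary
  representation of i-1 (so that i in [2^m] covers all m-bit strings),
  if i <= 2^m; Star otherwise.\<close>
definition beta :: "nat \<Rightarrow> nat \<Rightarrow> nat \<Rightarrow> pval" where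
  "beta m i j = (if i \<le> 2 ^ m then
      (if ((i - 1) div 2 ^ (m - j)) mod 2 = 1 then P1 else P0) else Star)"

definition hij :: "nat \<Rightarrow> nat \<Rightarrow> (nat \<Rightarrow> nat set) \<Rightarrow> nat \<Rightarrow> nat \<Rightarrow> pconcept" where
  "hij r d F i j = (\<lambda>x.
     if x \<in> {1..d * 2 ^ r} then (if x \<in> F i then P1 else P0)
     else if x = d * 2 ^ r + j then beta (d * r) i j
     else Star)"

definition Hrd :: "nat \<Rightarrow> nat \<Rightarrow> (nat \<Rightarrow> nat set) \<Rightarrow> pconcept set" where
  "Hrd r d F = {hij r d F i j | i j.
      i \<in> {1..(d * 2 ^ r) choose d} \<and> j \<in> {1..d * r}}"

end

theory Submission
  imports Defs Complex_Main
begin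

text \<open>Every concept of H(r,d) is the indicator of a d-set F(i) on [N] and is defined at only
  one further point N + j, so it takes the value 1 at most d + 1 times. Following the all-ones
  branch of a shattered mistake tree bounds its depth by d + 1, while every pattern on {1..d}
  extends to some F(i), so the tree querying 1, ..., d is shattered.

  Once the SOA has passed [N], the prefix of a concept determines F(i) and hence i. At position
  N + l the only concept with this prefix that is defined there is h(i,l), so the SOA copies its
  value beta(i,l), or chooses 0 if that is a star. In the end every h(i,j) carries the whole code
  beta(i,-) on N + 1, ..., N + dr, and since 2^(dr) <= binomial(N, d) every bit string occurs.\<close>

lemma not_shatters_tree_empty: "\<not> shatters_tree X {} t"
  by (induction t) auto

lemma shatters_tree_right_path:
  assumes "shatters_tree X H t" and "complete_depth t k" and "\<forall>h\<in>H. \<forall>a\<in>A. h a = P1"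
  shows "\<exists>h\<in>H. \<exists>S. finite S \<and> card S = k \<and> S \<inter> A = {} \<and> (\<forall>x\<in>S. h x = P1)"
  using assms
proof (induction t arbitrary: H A k)
  case Leaf
  then show ?case by (auto intro!: exI[of _ "{}"])
next
  case (Node x t0 t1)
  have x: "x \<notin> A"
  proof
    assume "x \<in> A"
    then have "{h \<in> H. h x = P0} = {}" using Node.prems(3) by auto
    then show False using Node.prems(1) not_shatters_tree_empty by (metis shatters_tree.simps(2))
  qed
  have "shatters_tree X {h \<in> H. h x = P1} t1" "complete_depth t1 (k - 1)"
    "\<forall>h\<in>{h \<in> H. h x = P1}. \<forall>a\<in>insert x A. h a = P1"
    using Node.prems by auto
  from Node.IH(2)[OF this] obtain h S where h: "h \<in> H" "h x = P1" "\<forall>y\<in>S. h y = P1"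
      and S: "finite S" "card S = k - 1" "S \<inter> insert x A = {}"
    by auto
  have "card (insert x S) = k" using S Node.prems(2) by auto
  then show ?case using h S x by (intro bexI[of _ h] exI[of _ "insert x S"]) auto
qed

lemma shattered_depth_le_ones_bound:
  assumes ones: "\<forall>h\<in>H. finite {x. h x = P1} \<and> card {x. h x = P1} \<le> b"
    and "shatters_tree X H t" and "complete_depth t k"
  shows "k \<le> b"
proof -
  obtain h S where "h \<in> H" "finite S" "card S = k" "\<forall>x\<in>S. h x = P1"
    using shatters_tree_right_path[OF assms(2,3), of "{}"] by blast
  then have "S \<subseteq> {x. h x = P1}" by auto
  then have "card S \<le> card {x. h x = P1}" using ones \<open>h \<in> H\<close> by (simp add: card_mono)
  then show ?thesis using ones \<open>h \<in> H\<close> \<open>card S = k\<close> by auto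
qed

lemma LD_le_ones_bound:
  assumes "\<forall>h\<in>H. finite {x. h x = P1} \<and> card {x. h x = P1} \<le> b"
  shows "LD X H \<le> int b"
proof (cases "H = {}")
  case False
  let ?P = "\<lambda>k. \<exists>t. complete_depth t k \<and> shatters_tree X H t"
  have bound: "k \<le> b" if "?P k" for k
    using that shattered_depth_le_ones_bound[OF assms] by blast
  have "?P 0" using False by (intro exI[of _ Leaf]) simp
  then have "?P (Greatest ?P)" using bound by (rule GreatestI_nat)
  then have "Greatest ?P \<le> b" by (rule bound)
  then show ?thesis using False unfolding LD_def by simp
qed (simp add: LD_def)

lemma LD_ge_shattered_depth:
  assumes "\<forall>h\<in>H. finite {x. h x = P1} \<and> card {x. h x = P1} \<le> b"
    and "shatters_tree X H t" and "complete_depth t k"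
  shows "int k \<le> LD X H"
proof -
  let ?P = "\<lambda>k. \<exists>t. complete_depth t k \<and> shatters_tree X H t"
  have "?P k" using assms(2,3) by blast
  then have "k \<le> Greatest ?P"
    by (rule Greatest_le_nat) (use shattered_depth_le_ones_bound[OF assms(1)] in blast)
  moreover have "H \<noteq> {}" using assms(2) not_shatters_tree_empty by blast
  ultimately show ?thesis unfolding LD_def by simp
qed

lemma shatters_set_restrict:
  assumes "shatters_set H S" and "x \<in> S"
  shows "shatters_set {h \<in> H. h x = (if b then P1 else P0)} (S - {x})"
  unfolding shatters_set_def
proof
  fix f :: "nat \<Rightarrow> bool"
  obtain h where "h \<in> H" "\<forall>y\<in>S. h y = (if (f(x := b)) y then P1 else P0)"
    using assms(1) unfolding shatters_set_def by blast
  then show "\<exists>h\<in>{h \<in> H. h x = (if b then P1 else P0)}. \<forall>y\<in>S - {x}. h y = (if f y then P1 else P0)"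
    using assms(2) by (intro bexI[of _ h]) auto
qed

fun chain_tree :: "nat \<Rightarrow> nat \<Rightarrow> mtree" where
  "chain_tree 0 s = Leaf"
| "chain_tree (Suc k) s = Node (Suc s) (chain_tree k (Suc s)) (chain_tree k (Suc s))"

lemma complete_depth_chain_tree: "complete_depth (chain_tree k s) k"
  by (induction k arbitrary: s) auto

lemma shatters_tree_chain_tree:
  assumes "shatters_set H {Suc s..s + k}" and "{Suc s..s + k} \<subseteq> X"
  shows "shatters_tree X H (chain_tree k s)"
  using assms
proof (induction k arbitrary: H s)
  case 0
  then show ?case unfolding shatters_set_def by auto
next
  case (Suc k)
  have "{Suc s..s + Suc k} - {Suc s} = {Suc (Suc s)..Suc s + k}" by auto
  then have "shatters_set {h \<in> H. h (Suc s) = (if b then P1 else P0)} {Suc (Suc s)..Suc s + k}" for b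
    using shatters_set_restrict[OF Suc.prems(1), of "Suc s" b] by simp
  then have "shatters_tree X {h \<in> H. h (Suc s) = (if b then P1 else P0)} (chain_tree k (Suc s))" for b
    using Suc.prems(2) by (intro Suc.IH) auto
  from this[of False] this[of True] show ?case using Suc.prems(2) by auto
qed

lemma card_le_VC:
  assumes "finite X" and "S \<subseteq> X" and "shatters_set H S"
  shows "card S \<le> VC X H"
proof -
  let ?P = "\<lambda>k. \<exists>S \<subseteq> X. card S = k \<and> shatters_set H S"
  have "?P (card S)" using assms(2,3) by blast
  moreover have "k \<le> card X" if "?P k" for k
    using that assms(1) card_mono by blast
  ultimately show ?thesis unfolding VC_def by (rule Greatest_le_nat)
qed

lemma exists_nat_with_bits: "\<exists>v::nat. v < 2 ^ m \<and> (\<forall>p<m. bit v p = f p)"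
proof -
  define v :: nat where "v = horner_sum of_bool 2 (map f [0..<m])"
  have "v = take_bit m v" unfolding v_def by (simp add: take_bit_horner_sum_bit_eq)
  then have "v < 2 ^ m" by (metis take_bit_nat_less_exp)
  moreover have "\<forall>p<m. bit v p = f p" unfolding v_def by (simp add: bit_horner_sum_bit_iff)
  ultimately show ?thesis by blast
qed

lemma two_pow_le_choose: "2 ^ (d * r) \<le> (d * 2 ^ r) choose d"
proof (cases "d = 0")
  case False
  have "(real (d * 2 ^ r) / real d) ^ d \<le> real ((d * 2 ^ r) choose d)"
    by (rule binomial_ge_n_over_k_pow_k) simp
  then have "real (2 ^ (d * r)) \<le> real ((d * 2 ^ r) choose d)"
    using False by (simp add: power_mult[symmetric] mult.commute)
  then show ?thesis by linarith
qed simp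

definition soa_choice :: "nat set \<Rightarrow> pconcept set \<Rightarrow> nat \<Rightarrow> pconcept \<Rightarrow> pval" where
  "soa_choice X H k h =
     (if LD X {g \<in> H. (\<forall>i \<in> {1..<k}. g i = h i) \<and> g k = P1}
         > LD X {g \<in> H. (\<forall>i \<in> {1..<k}. g i = h i) \<and> g k = P0}
      then P1 else P0)"

definition soa_update :: "nat set \<Rightarrow> pconcept set \<Rightarrow> nat \<Rightarrow> pconcept \<Rightarrow> pconcept" where
  "soa_update X H k h =
     (if h k = Star \<and> (\<forall>i \<in> {1..<k}. h i \<noteq> Star) then h(k := soa_choice X H k h) else h)"

lemma soa_step_eq_image: "soa_step X H k = soa_update X H k ` H"
  unfolding soa_step_def soa_update_def soa_choice_def ..

lemma soa_choice_eq_P1: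
  assumes "{g \<in> H. (\<forall>i \<in> {1..<k}. g i = h i) \<and> g k = P1} \<noteq> {}"
    and "{g \<in> H. (\<forall>i \<in> {1..<k}. g i = h i) \<and> g k = P0} = {}"
  shows "soa_choice X H k h = P1"
  using assms by (simp add: soa_choice_def LD_def)

lemma soa_choice_eq_P0:
  assumes "{g \<in> H. (\<forall>i \<in> {1..<k}. g i = h i) \<and> g k = P1} = {}"
  shows "soa_choice X H k h = P0"
  using assms by (simp add: soa_choice_def LD_def)

definition star_to_P0 :: "pval \<Rightarrow> pval" where
  "star_to_P0 v = (if v = Star then P0 else v)"

context
  fixes r d :: nat and F :: "nat \<Rightarrow> nat set"
begin

abbreviation (input) base_size :: nat where "base_size \<equiv> d * 2 ^ r"

abbreviation (input) code_length :: nat where "code_length \<equiv> d * r"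

text \<open>The concept h(i,j) after the SOA has processed positions 1, ..., k.\<close>

definition disamb_concept :: "nat \<Rightarrow> nat \<Rightarrow> nat \<Rightarrow> pconcept" where
  "disamb_concept i j k = (\<lambda>x.
     if x \<in> {1..base_size} then (if x \<in> F i then P1 else P0)
     else if base_size < x \<and> x \<le> k then star_to_P0 (beta code_length i (x - base_size))
     else if x = base_size + j then beta code_length i j
     else Star)"

definition disamb_class :: "nat \<Rightarrow> pconcept set" where
  "disamb_class k = (\<lambda>(i, j). disamb_concept i j k) ` ({1..base_size choose d} \<times> {1..code_length})"

lemma Hrd_eq_disamb_class_0: "Hrd r d F = disamb_class 0"
proof -
  have "hij r d F i j = disamb_concept i j 0" for i j
    unfolding hij_def disamb_concept_def by (rule ext) auto
  then show ?thesis unfolding Hrd_def disamb_class_def by (auto; blast)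
qed

lemma disamb_concept_in_class:
  "i \<in> {1..base_size choose d} \<Longrightarrow> j \<in> {1..code_length} \<Longrightarrow> disamb_concept i j k \<in> disamb_class k"
  unfolding disamb_class_def by force

lemma disamb_concept_Suc:
  "disamb_concept i j (Suc k) =
     (if base_size < Suc k
      then (disamb_concept i j k)(Suc k := star_to_P0 (beta code_length i (Suc k - base_size)))
      else disamb_concept i j k)"
  unfolding disamb_concept_def by (rule ext) auto

lemma disamb_concept_defined:
  "x \<in> {1..k} \<Longrightarrow> disamb_concept i j k x \<noteq> Star"
  unfolding disamb_concept_def star_to_P0_def by auto

lemma disamb_concept_beyond:
  "base_size < x \<Longrightarrow> k < x \<Longrightarrow>
   disamb_concept i j k x = (if x = base_size + j then beta code_length i j else Star)"
  unfolding disamb_concept_def by auto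

lemma disamb_concept_prefix_indep:
  "x \<in> {1..k} \<Longrightarrow> disamb_concept i j k x = disamb_concept i j' k x"
  unfolding disamb_concept_def by auto

lemma disamb_class_shatters_code:
  assumes "r \<ge> 1" and "d \<ge> 1"
  shows "shatters_set (disamb_class (base_size + code_length))
           {base_size + 1..base_size + code_length}"
  unfolding shatters_set_def
proof
  fix f :: "nat \<Rightarrow> bool"
  obtain v :: nat where v: "v < 2 ^ code_length"
      and bits: "\<forall>p<code_length. bit v p = f (base_size + code_length - p)"
    using exists_nat_with_bits[of code_length "\<lambda>p. f (base_size + code_length - p)"] by blast
  have "Suc v \<in> {1..base_size choose d}" using v two_pow_le_choose[of d r] by simp
  moreover have "1 \<in> {1..code_length}" using assms by simp
  ultimately have mem:
    "disamb_concept (Suc v) 1 (base_size + code_length) \<in> disamb_class (base_size + code_length)"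
    by (rule disamb_concept_in_class)
  have "disamb_concept (Suc v) 1 (base_size + code_length) x = (if f x then P1 else P0)"
    if x: "x \<in> {base_size + 1..base_size + code_length}" for x
  proof -
    define p where "p = code_length - (x - base_size)"
    have p: "p < code_length" "base_size + code_length - p = x" using x unfolding p_def by auto
    have "disamb_concept (Suc v) 1 (base_size + code_length) x
        = star_to_P0 (beta code_length (Suc v) (x - base_size))"
      using x unfolding disamb_concept_def by auto
    also have "\<dots> = (if (v div 2 ^ p) mod 2 = 1 then P1 else P0)"
      using v unfolding star_to_P0_def beta_def p_def by simp
    also have "\<dots> = (if bit v p then P1 else P0)"
      by (metis bit_iff_odd odd_iff_mod_2_eq_one)
    finally show ?thesis using bits p by simp
  qed
  then show "\<exists>h\<in>disamb_class (base_size + code_length).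
      \<forall>x\<in>{base_size + 1..base_size + code_length}. h x = (if f x then P1 else P0)"
    using mem by blast
qed

context
  assumes bij: "bij_betw F {1..base_size choose d} {S. S \<subseteq> {1..base_size} \<and> card S = d}"
begin

lemma disamb_concept_index_unique:
  assumes "i \<in> {1..base_size choose d}" and "i' \<in> {1..base_size choose d}"
    and agree: "\<forall>x \<in> {1..base_size}. disamb_concept i' j' k x = disamb_concept i j k x"
  shows "i' = i"
proof -
  have "F i \<subseteq> {1..base_size}" "F i' \<subseteq> {1..base_size}"
    using bij_betwE[OF bij] assms(1,2) by auto
  moreover have "\<forall>x \<in> {1..base_size}. x \<in> F i' \<longleftrightarrow> x \<in> F i"
    using agree unfolding disamb_concept_def by (metis pval.distinct(1))
  ultimately have "F i' = F i" by blast
  then show ?thesis using bij_betw_imp_inj_on[OF bij] assms(1,2) by (meson inj_onD)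
qed

lemma soa_choice_disamb_class:
  assumes i: "i \<in> {1..base_size choose d}"
    and k: "base_size < Suc k" "Suc k \<le> base_size + code_length"
  shows "soa_choice X (disamb_class k) (Suc k) (disamb_concept i j k)
           = star_to_P0 (beta code_length i (Suc k - base_size))"
proof -
  define l where "l = Suc k - base_size"
  define C where "C v = {g \<in> disamb_class k.
     (\<forall>x \<in> {1..<Suc k}. g x = disamb_concept i j k x) \<and> g (Suc k) = v}" for v
  \<comment> \<open>Among the concepts with the same prefix only h(i,l) is defined at N + l.\<close>
  have only_beta: "v = beta code_length i l" if "g \<in> C v" "v \<noteq> Star" for g v
  proof -
    obtain i' j' where i': "i' \<in> {1..base_size choose d}" and g: "g = disamb_concept i' j' k"
      using \<open>g \<in> C v\<close> unfolding C_def disamb_class_def by auto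
    have "\<forall>x \<in> {1..base_size}. disamb_concept i' j' k x = disamb_concept i j k x"
      using \<open>g \<in> C v\<close> k(1) unfolding C_def g by auto
    then have "i' = i" using disamb_concept_index_unique[OF i i'] by blast
    moreover have "v = (if Suc k = base_size + j' then beta code_length i' j' else Star)"
      using \<open>g \<in> C v\<close> k(1) disamb_concept_beyond unfolding C_def g by auto
    ultimately show ?thesis using that(2) unfolding l_def by (auto split: if_splits)
  qed
  have "l \<in> {1..code_length}" using k unfolding l_def by auto
  then have "disamb_concept i l k \<in> C (beta code_length i l)"
    using disamb_concept_in_class[OF i] disamb_concept_prefix_indep disamb_concept_beyond k(1)
    unfolding C_def l_def by auto
  then have witness: "C (beta code_length i l) \<noteq> {}" by blast
  have "soa_choice X (disamb_class k) (Suc k) (disamb_concept i j k)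
      = star_to_P0 (beta code_length i l)"
  proof (cases "beta code_length i l = P1")
    case True
    then have "C P0 = {}" using only_beta by fastforce
    then show ?thesis
      using witness True unfolding C_def star_to_P0_def by (simp add: soa_choice_eq_P1)
  next
    case False
    then have "C P1 = {}" using only_beta by fastforce
    then have "soa_choice X (disamb_class k) (Suc k) (disamb_concept i j k) = P0"
      unfolding C_def by (rule soa_choice_eq_P0)
    then show ?thesis using False unfolding star_to_P0_def by (cases "beta code_length i l") auto
  qed
  then show ?thesis by (simp only: l_def)
qed

lemma soa_update_disamb_concept:
  assumes i: "i \<in> {1..base_size choose d}" and k: "Suc k \<le> base_size + code_length"
  shows "soa_update X (disamb_class k) (Suc k) (disamb_concept i j k) = disamb_concept i j (Suc k)"
proof (cases "base_size < Suc k")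
  case False
  then have "disamb_concept i j k (Suc k) \<noteq> Star" unfolding disamb_concept_def by auto
  then show ?thesis using False by (simp add: soa_update_def disamb_concept_Suc)
next
  case beyond: True
  let ?v = "star_to_P0 (beta code_length i (Suc k - base_size))"
  show ?thesis
  proof (cases "disamb_concept i j k (Suc k) = Star")
    case True
    moreover have "\<forall>x \<in> {1..<Suc k}. disamb_concept i j k x \<noteq> Star"
      using disamb_concept_defined by auto
    ultimately show ?thesis
      using soa_choice_disamb_class[OF i beyond k] beyond
      by (simp add: soa_update_def disamb_concept_Suc)
  next
    case False
    then have "Suc k = base_size + j" "beta code_length i j \<noteq> Star"
      using disamb_concept_beyond[OF beyond, of k i j] by (auto split: if_splits)
    then have "disamb_concept i j k (Suc k) = ?v"
      using disamb_concept_beyond[OF beyond, of k i j] by (simp add: star_to_P0_def)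
    then have "(disamb_concept i j k)(Suc k := ?v) = disamb_concept i j k" by (rule fun_upd_idem)
    then show ?thesis using False beyond by (simp add: soa_update_def disamb_concept_Suc)
  qed
qed

lemma soa_step_disamb_class:
  assumes k: "Suc k \<le> base_size + code_length"
  shows "soa_step X (disamb_class k) (Suc k) = disamb_class (Suc k)"
proof -
  have "soa_update X (disamb_class k) (Suc k) ` disamb_class k
        = (\<lambda>(i, j). soa_update X (disamb_class k) (Suc k) (disamb_concept i j k))
          ` ({1..base_size choose d} \<times> {1..code_length})"
    unfolding disamb_class_def[of k] image_image by (simp add: case_prod_beta')
  also have "\<dots> = disamb_class (Suc k)"
    unfolding disamb_class_def[of "Suc k"]
    using soa_update_disamb_concept[OF _ k] by (intro image_cong) auto
  finally show ?thesis by (simp add: soa_step_eq_image)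
qed

lemma soa_disamb_prefix_eq_disamb_class:
  "k \<le> base_size + code_length \<Longrightarrow>
    foldl (\<lambda>G k. soa_step X G k) (Hrd r d F) [1..<Suc k] = disamb_class k"
proof (induction k)
  case 0
  show ?case by (simp add: Hrd_eq_disamb_class_0)
next
  case (Suc k)
  then show ?case using soa_step_disamb_class[of k X] by simp
qed

lemma soa_disamb_Hrd:
  "soa_disamb (d * (2 ^ r + r)) (Hrd r d F) = disamb_class (base_size + code_length)"
  using soa_disamb_prefix_eq_disamb_class[of "base_size + code_length"]
  by (simp add: soa_disamb_def distrib_left)

lemma Hrd_ones_bound:
  "\<forall>h\<in>Hrd r d F. finite {x. h x = P1} \<and> card {x. h x = P1} \<le> d + 1"
proof
  fix h assume "h \<in> Hrd r d F"
  then obtain i j where i: "i \<in> {1..base_size choose d}" and h: "h = hij r d F i j"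
    unfolding Hrd_def by blast
  have Fi: "F i \<subseteq> {1..base_size}" "card (F i) = d" using bij_betwE[OF bij] i by auto
  then have "finite (F i)" using finite_subset by blast
  then have fin: "finite (insert (base_size + j) (F i))" by simp
  have sub: "{x. h x = P1} \<subseteq> insert (base_size + j) (F i)"
    unfolding h hij_def by (auto split: if_splits)
  have "card {x. h x = P1} \<le> card (insert (base_size + j) (F i))"
    using card_mono[OF fin sub] .
  also have "\<dots> \<le> d + 1" using Fi \<open>finite (F i)\<close> by (simp add: card_insert_if)
  finally show "finite {x. h x = P1} \<and> card {x. h x = P1} \<le> d + 1"
    using finite_subset[OF sub fin] by blast
qed

lemma Hrd_shatters_prefix:
  assumes "r \<ge> 1" and "d \<ge> 1"
  shows "shatters_set (Hrd r d F) {1..d}"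
  unfolding shatters_set_def
proof
  fix f :: "nat \<Rightarrow> bool"
  define A where "A = {x \<in> {1..d}. f x}"
  define S where "S = A \<union> {d + 1..d + (d - card A)}"
  have "2 * d \<le> base_size"
    using \<open>r \<ge> 1\<close> by (simp add: mult.commute self_le_power)
  have A: "A \<subseteq> {1..d}" unfolding A_def by auto
  then have "card A \<le> d" using card_mono[of "{1..d}" A] by simp
  moreover have "A \<inter> {d + 1..d + (d - card A)} = {}" using A by auto
  ultimately have "card S = d" unfolding S_def by (simp add: card_Un_disjoint A_def)
  moreover have "S \<subseteq> {1..2 * d}" unfolding S_def using A by auto
  then have "S \<subseteq> {1..base_size}"
    using \<open>2 * d \<le> base_size\<close> by (meson atLeastatMost_subset_iff order_refl subset_trans)
  ultimately have "S \<in> F ` {1..base_size choose d}"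
    using bij_betw_imp_surj_on[OF bij] by simp
  then obtain i where i: "i \<in> {1..base_size choose d}" and Fi: "F i = S" by blast
  have "(1::nat) \<in> {1..code_length}" using assms by simp
  then have "hij r d F i 1 \<in> Hrd r d F" unfolding Hrd_def using i by blast
  moreover have "hij r d F i 1 x = (if f x then P1 else P0)" if x: "x \<in> {1..d}" for x
  proof -
    have "d \<le> base_size" using \<open>2 * d \<le> base_size\<close> by linarith
    then have "x \<in> {1..base_size}" using x by (metis atLeastAtMost_iff le_trans)
    moreover have "x \<in> S \<longleftrightarrow> f x" using x unfolding S_def A_def by auto
    ultimately show ?thesis unfolding hij_def Fi by simp
  qed
  ultimately show "\<exists>h\<in>Hrd r d F. \<forall>x\<in>{1..d}. h x = (if f x then P1 else P0)" by blast
qed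

end

end

theorem mainTheorem5:
  fixes r d :: nat and F :: "nat \<Rightarrow> nat set"
  assumes "r \<ge> 1" and "d \<ge> 1"
    and "bij_betw F {1..(d * 2 ^ r) choose d} {S. S \<subseteq> {1..d * 2 ^ r} \<and> card S = d}"
  shows "int d \<le> LD {1..d * (2 ^ r + r)} (Hrd r d F)
     \<and> LD {1..d * (2 ^ r + r)} (Hrd r d F) \<le> int d + 1
     \<and> shatters_set (soa_disamb (d * (2 ^ r + r)) (Hrd r d F))
          {d * 2 ^ r + 1 .. d * 2 ^ r + d * r}
     \<and> VC {1..d * (2 ^ r + r)} (soa_disamb (d * (2 ^ r + r)) (Hrd r d F)) \<ge> d * r"
proof -
  let ?X = "{1..d * (2 ^ r + r)}"
  let ?code = "{d * 2 ^ r + 1 .. d * 2 ^ r + d * r}"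
  note ones = Hrd_ones_bound[OF assms(3)]
  have "1 \<le> (2::nat) ^ r + r" using one_le_power[of "2::nat" r] by linarith
  then have "d \<le> d * (2 ^ r + r)" by (metis mult.right_neutral mult_le_mono2)
  then have "{1..d} \<subseteq> ?X" by auto
  then have "shatters_tree ?X (Hrd r d F) (chain_tree d 0)"
    using shatters_tree_chain_tree Hrd_shatters_prefix[OF assms(3,1,2)] by simp
  then have "int d \<le> LD ?X (Hrd r d F)"
    using LD_ge_shattered_depth[OF ones] complete_depth_chain_tree by blast
  moreover have "LD ?X (Hrd r d F) \<le> int d + 1" using LD_le_ones_bound[OF ones, of ?X] by simp
  moreover have shatters: "shatters_set (soa_disamb (d * (2 ^ r + r)) (Hrd r d F)) ?code"
    using disamb_class_shatters_code[OF assms(1,2)] soa_disamb_Hrd[OF assms(3)] by simp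
  moreover have "card ?code \<le> VC ?X (soa_disamb (d * (2 ^ r + r)) (Hrd r d F))"
    using card_le_VC[OF _ _ shatters] by (simp add: distrib_left)
  ultimately show ?thesis by simp
qed

end
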